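(* Let $h$ be a positive, non-decreasing, continuously differentiable function with $h(u)\to\infty$ and $uh'(u)/h(u)\to0$ as $u\to\infty$. Let $g(u)=h(u)/(uh'(u))$ and $$v(u)=\min\left(\log u,\ \min_{\log u\le t\le\log^2 u}g(t)\right).$$ Then $v(u)\to\infty$ as $u\to\infty$, and $$h(v(u)\log u)=(1+o(1))\,h(\log u)\quad\text{as } u\to\infty.$$
   Context: $\log^2u$ means $(\log u)^2$. *)

theory Defs
  imports "HOL-Analysis.Analysis" "HOL-Library.Landau_Symbols"
begin

definition gfun :: "(real \<Rightarrow> real) \<Rightarrow> (real \<Rightarrow> real) \<Rightarrow> real \<Rightarrow> ereal" where
  "gfun h h' t = (if h' t = 0 then \<infinity> else ereal (h t / (t * h' t)))"

definition vfun :: "(real \<Rightarrow> real) \<Rightarrow> (real \<Rightarrow> real) \<Rightarrow> real \<Rightarrow> real" where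
  "vfun h h' u = real_of_ereal (min (ereal (ln u)) (INF t\<in>{ln u..(ln u)^2}. gfun h h' t))"

end

theory Submission
  imports Defs "HOL-Real_Asymp.Real_Asymp"
begin

text \<open>
  Since the elasticity \<open>t h'(t) / h(t) = 1 / g(t)\<close> tends to \<open>0\<close>, \<open>g\<close> tends to infinity and
  hence so does \<open>v\<close>. Put \<open>L = log u\<close> and \<open>v = v(u)\<close>. The mean value theorem for
  \<open>s \<mapsto> log h(e^s)\<close> on \<open>[log L, log (v L)]\<close> gives
  \<open>log (h(v L) / h(L)) = log v \<cdot> t h'(t) / h(t)\<close> for some \<open>t \<in> (L, v L) \<subseteq> [log u, log\<^sup>2 u]\<close>,
  where \<open>t h'(t) / h(t) \<le> 1 / v\<close> by the choice of \<open>v\<close>. Hence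
  \<open>1 \<le> h(v L) / h(L) \<le> v\<^bsup>1/v\<^esup> \<longrightarrow> 1\<close>.
\<close>

lemma nondecreasing_imp_DERIV_nonneg:
  fixes f :: "real \<Rightarrow> real"
  assumes mono: "\<And>x y. a < x \<Longrightarrow> x \<le> y \<Longrightarrow> f x \<le> f y"
    and deriv: "(f has_real_derivative D) (at t)" and "a < t"
  shows "0 \<le> D"
proof (rule ccontr)
  assume "\<not> 0 \<le> D"
  then obtain d where "0 < d" and dec: "\<And>e. 0 < e \<Longrightarrow> e < d \<Longrightarrow> f (t + e) < f t"
    using DERIV_neg_dec_right[OF deriv] by force
  then have "f (t + d / 2) < f t" by simp
  moreover have "f t \<le> f (t + d / 2)" using mono \<open>a < t\<close> \<open>0 < d\<close> by simp
  ultimately show False by simp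
qed

lemma ln_quotient_mean_value:
  fixes h h' :: "real \<Rightarrow> real"
  assumes "0 < x" "x < y"
    and h: "\<And>t. x \<le> t \<Longrightarrow> t \<le> y \<Longrightarrow> 0 < h t \<and> (h has_real_derivative h' t) (at t)"
  obtains t where "x < t" "t < y" "ln (h y) - ln (h x) = ln (y / x) * (t * h' t / h t)"
proof -
  define \<phi> where "\<phi> = (\<lambda>s. ln (h (exp s)))"
  have "ln x < ln y" using assms(1,2) by simp
  moreover have "DERIV \<phi> s :> h' (exp s) * exp s / h (exp s)" if "ln x \<le> s" "s \<le> ln y" for s
  proof -
    have "x \<le> exp s" "exp s \<le> y"
      using that exp_le_cancel_iff[of "ln x" s] exp_le_cancel_iff[of s "ln y"] assms(1,2)
      by simp_all
    then have "0 < h (exp s)" and dh: "(h has_real_derivative h' (exp s)) (at (exp s))"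
      using h by auto
    from DERIV_chain2[OF DERIV_ln_divide[OF this(1)] DERIV_chain2[OF dh DERIV_exp]]
    show "DERIV \<phi> s :> h' (exp s) * exp s / h (exp s)" unfolding \<phi>_def by simp
  qed
  ultimately have "\<exists>s. ln x < s \<and> s < ln y \<and>
      \<phi> (ln y) - \<phi> (ln x) = (ln y - ln x) * (h' (exp s) * exp s / h (exp s))"
    by (rule MVT2)
  then obtain s where s: "ln x < s" "s < ln y"
    and eq: "\<phi> (ln y) - \<phi> (ln x) = (ln y - ln x) * (h' (exp s) * exp s / h (exp s))"
    by blast
  show thesis
  proof (rule that)
    show "x < exp s" "exp s < y"
      using s exp_less_cancel_iff[of "ln x" s] exp_less_cancel_iff[of s "ln y"] assms(1,2)
      by simp_all
    have "ln (y / x) = ln y - ln x" using assms(1,2) by (simp add: ln_div)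
    then show "ln (h y) - ln (h x) = ln (y / x) * (exp s * h' (exp s) / h (exp s))"
      using eq assms(1,2) by (simp add: \<phi>_def ac_simps)
  qed
qed

lemma quotient_le_exp_if_elasticity_le:
  fixes h h' :: "real \<Rightarrow> real"
  assumes "0 < L" "1 \<le> v"
    and h: "\<And>t. L \<le> t \<Longrightarrow> t \<le> v * L \<Longrightarrow> 0 < h t \<and> (h has_real_derivative h' t) (at t)"
    and elasticity: "\<And>t. L < t \<Longrightarrow> t < v * L \<Longrightarrow> t * h' t / h t \<le> 1 / v"
  shows "h (v * L) / h L \<le> exp (ln v / v)"
proof (cases "v = 1")
  case False
  with assms(1,2) have "L < v * L" by simp
  then obtain t where t: "L < t" "t < v * L"
    and eq: "ln (h (v * L)) - ln (h L) = ln (v * L / L) * (t * h' t / h t)"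
    using ln_quotient_mean_value[OF \<open>0 < L\<close> _ h] by blast
  have "ln (h (v * L)) - ln (h L) = ln v * (t * h' t / h t)"
    using eq \<open>0 < L\<close> by simp
  also have "\<dots> \<le> ln v * (1 / v)"
    using elasticity[OF t] \<open>1 \<le> v\<close> by (intro mult_left_mono) auto
  finally have "ln (h (v * L)) - ln (h L) \<le> ln v / v" by simp
  moreover have "0 < h L" "0 < h (v * L)" using h \<open>L < v * L\<close> by auto
  then have "h (v * L) / h L = exp (ln (h (v * L)) - ln (h L))" by (simp add: exp_diff)
  ultimately show ?thesis by simp
qed (use h \<open>0 < L\<close> in auto)

lemma elasticity_le_if_gfun_ge:
  assumes "0 < t" "0 < h t" "0 \<le> h' t" "0 < v" "ereal v \<le> gfun h h' t"
  shows "t * h' t / h t \<le> 1 / v"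
proof (cases "h' t = 0")
  case False
  with assms have "v \<le> h t / (t * h' t)" "0 < h' t" by (simp_all add: gfun_def)
  with assms(1,2,4) show ?thesis by (simp add: field_simps)
qed (use assms in simp)

lemma gfun_eventually_ge:
  assumes "((\<lambda>t. t * h' t / h t) \<longlongrightarrow> 0) at_top"
    and "eventually (\<lambda>t. 0 < h t \<and> 0 \<le> h' t) at_top"
  shows "eventually (\<lambda>t. ereal M \<le> gfun h h' t) at_top"
proof -
  define M' where "M' = max M 1"
  have "eventually (\<lambda>t. t * h' t / h t < 1 / M') at_top"
    using order_tendstoD(2)[OF assms(1)] by (simp add: M'_def)
  with assms(2) eventually_gt_at_top[of 0]
  show ?thesis
  proof eventually_elim
    case (elim t)
    show ?case
    proof (cases "h' t = 0")
      case False
      have "0 < M'" by (simp add: M'_def)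
      with elim False have "M' < h t / (t * h' t)" by (simp add: field_simps)
      with False show ?thesis by (simp add: gfun_def M'_def)
    qed (simp add: gfun_def)
  qed
qed

text \<open>\<open>real_of_ereal\<close> sends \<open>\<plusminus>\<infinity>\<close> to \<open>0\<close>, so a positive value of \<open>vfun\<close> is the genuine minimum.\<close>

lemma vfun_pos_imp_le:
  assumes "0 < vfun h h' u"
  shows "vfun h h' u \<le> ln u"
    and "t \<in> {ln u..(ln u)^2} \<Longrightarrow> ereal (vfun h h' u) \<le> gfun h h' t"
proof -
  define W where "W = min (ereal (ln u)) (INF t\<in>{ln u..(ln u)^2}. gfun h h' t)"
  have "W = ereal (vfun h h' u)"
    using assms by (cases W) (simp_all add: vfun_def W_def)
  moreover have "W \<le> ereal (ln u)" "W \<le> (INF t\<in>{ln u..(ln u)^2}. gfun h h' t)"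
    by (simp_all add: W_def)
  ultimately show "vfun h h' u \<le> ln u"
    and "t \<in> {ln u..(ln u)^2} \<Longrightarrow> ereal (vfun h h' u) \<le> gfun h h' t"
    by (auto intro: order_trans[OF _ INF_lower])
qed

lemma vfun_ge:
  assumes "M \<le> ln u" "\<And>t. t \<in> {ln u..(ln u)^2} \<Longrightarrow> ereal M \<le> gfun h h' t"
  shows "M \<le> vfun h h' u"
proof -
  define W where "W = min (ereal (ln u)) (INF t\<in>{ln u..(ln u)^2}. gfun h h' t)"
  have "ereal M \<le> W" "W \<le> ereal (ln u)"
    using assms by (auto simp: W_def intro: INF_greatest)
  then show ?thesis by (cases W) (simp_all add: vfun_def W_def[symmetric])
qed

lemma filterlim_vfun_at_top:
  assumes "\<And>M. eventually (\<lambda>t. ereal M \<le> gfun h h' t) at_top"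
  shows "filterlim (vfun h h') at_top at_top"
  unfolding filterlim_at_top
proof
  fix M
  obtain T where T: "\<And>t. T \<le> t \<Longrightarrow> ereal M \<le> gfun h h' t"
    using assms[of M] by (auto simp: eventually_at_top_linorder)
  have "eventually (\<lambda>u. max T M \<le> ln u) at_top"
    using ln_at_top unfolding filterlim_at_top by blast
  then show "eventually (\<lambda>u. M \<le> vfun h h' u) at_top"
    by eventually_elim (auto intro!: vfun_ge T)
qed

lemma h_vfun_quotient_bounds:
  fixes h h' :: "real \<Rightarrow> real"
  assumes mono: "\<And>x y. a < x \<Longrightarrow> x \<le> y \<Longrightarrow> h x \<le> h y"
    and h: "\<And>t. a < t \<Longrightarrow> 0 < h t \<and> 0 \<le> h' t \<and> (h has_real_derivative h' t) (at t)"
    and "a < ln u" "0 < ln u" "1 \<le> vfun h h' u"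
  defines "v \<equiv> vfun h h' u"
  shows "1 \<le> h (v * ln u) / h (ln u)" and "h (v * ln u) / h (ln u) \<le> exp (ln v / v)"
proof -
  have "v \<le> ln u" using vfun_pos_imp_le(1) assms(5) by (simp add: v_def)
  have "ln u \<le> v * ln u" using assms(4,5) by (simp add: v_def)
  then show "1 \<le> h (v * ln u) / h (ln u)"
    using mono[OF \<open>a < ln u\<close>] h[OF \<open>a < ln u\<close>] by simp
  have "t * h' t / h t \<le> 1 / v" if "ln u < t" "t < v * ln u" for t
  proof (rule elasticity_le_if_gfun_ge)
    have "v * ln u \<le> ln u * ln u"
      using \<open>v \<le> ln u\<close> \<open>0 < ln u\<close> by (simp add: mult_right_mono)
    with that have "t \<le> (ln u)^2" by (simp add: power2_eq_square)
    then show "ereal v \<le> gfun h h' t"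
      using vfun_pos_imp_le(2) that assms(5) by (simp add: v_def)
    have "a < t" using that \<open>a < ln u\<close> by simp
    then show "0 < h t" "0 \<le> h' t" using h by auto
  qed (use that assms(4,5) in \<open>auto simp: v_def\<close>)
  then show "h (v * ln u) / h (ln u) \<le> exp (ln v / v)"
    using assms(3-5) h by (intro quotient_le_exp_if_elasticity_le) (auto simp: v_def)
qed

lemma h_vfun_quotient_tendsto_1:
  fixes h h' :: "real \<Rightarrow> real"
  assumes mono: "\<And>x y. a < x \<Longrightarrow> x \<le> y \<Longrightarrow> h x \<le> h y"
    and h: "\<And>t. a < t \<Longrightarrow> 0 < h t \<and> 0 \<le> h' t \<and> (h has_real_derivative h' t) (at t)"
    and v_lim: "filterlim (vfun h h') at_top at_top"
  shows "((\<lambda>u. h (vfun h h' u * ln u) / h (ln u)) \<longlongrightarrow> 1) at_top"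
proof -
  let ?v = "vfun h h'"
  have "eventually (\<lambda>u. max a 0 < ln u) at_top"
    using ln_at_top unfolding filterlim_at_top_dense by blast
  moreover have "eventually (\<lambda>u. 1 \<le> ?v u) at_top"
    using v_lim unfolding filterlim_at_top by blast
  ultimately have "eventually (\<lambda>u. 1 \<le> h (?v u * ln u) / h (ln u) \<and>
      h (?v u * ln u) / h (ln u) \<le> exp (ln (?v u) / ?v u)) at_top"
  proof eventually_elim
    case (elim u)
    then have "a < ln u" "0 < ln u" "1 \<le> ?v u" by auto
    from h_vfun_quotient_bounds[OF mono h this] show ?case by blast
  qed
  then have "eventually (\<lambda>u. 1 \<le> h (?v u * ln u) / h (ln u)) at_top"
    and "eventually (\<lambda>u. h (?v u * ln u) / h (ln u) \<le> exp (ln (?v u) / ?v u)) at_top"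
    unfolding eventually_conj_iff by simp_all
  moreover have "((\<lambda>x::real. exp (ln x / x)) \<longlongrightarrow> 1) at_top" by real_asymp
  then have "((\<lambda>u. exp (ln (?v u) / ?v u)) \<longlongrightarrow> 1) at_top"
    by (rule filterlim_compose[OF _ v_lim])
  ultimately show ?thesis
    by (rule tendsto_sandwich[OF _ _ tendsto_const])
qed

theorem lemma6p3:
  fixes h h' :: "real \<Rightarrow> real" and a :: real
  assumes pos: "\<And>u. u > a \<Longrightarrow> h u > 0"
    and mono: "\<And>u w. a < u \<Longrightarrow> u \<le> w \<Longrightarrow> h u \<le> h w"
    and deriv: "\<And>u. u > a \<Longrightarrow> (h has_real_derivative h' u) (at u)"
    and cont: "continuous_on {a<..} h'"
    and lim_h: "filterlim h at_top at_top"
    and lim_ratio: "((\<lambda>u. u * h' u / h u) \<longlongrightarrow> 0) at_top"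
  shows "filterlim (vfun h h') at_top at_top \<and>
         (\<lambda>u. h (vfun h h' u * ln u)) \<sim>[at_top] (\<lambda>u. h (ln u))"
proof -
  have h: "0 < h t \<and> 0 \<le> h' t \<and> (h has_real_derivative h' t) (at t)" if "a < t" for t
    using pos[OF that] deriv[OF that]
      nondecreasing_imp_DERIV_nonneg[of a h, OF mono deriv[OF that] that] by blast
  have v_lim: "filterlim (vfun h h') at_top at_top"
    by (intro filterlim_vfun_at_top gfun_eventually_ge[OF lim_ratio]
        eventually_mono[OF eventually_gt_at_top[of a]]) (simp add: h)
  moreover have "((\<lambda>u. h (vfun h h' u * ln u) / h (ln u)) \<longlongrightarrow> 1) at_top"
    using mono h v_lim by (rule h_vfun_quotient_tendsto_1)
  ultimately show ?thesis by (simp add: asymp_equivI')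
qed

end
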